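(* If $X$ is an infinite compact Hausdorff $\Delta$-space, then the Banach space $C(X)$ (with the sup norm) is not a Grothendieck space. The converse fails: for $X=[0,\omega_1]$, $C(X)$ is not a Grothendieck space but $X$ is not a $\Delta$-space.
   Context: A Banach space $E$ is a Grothendieck space if every weak$^*$-convergent sequence in the dual $E^*$ converges weakly. A topological space $X$ is a $\Delta$-space if for every decreasing sequence $\{D_n:n\in\omega\}$ of subsets of $X$ with $\bigcap_n D_n=\emptyset$ there is a decreasing sequence $\{V_n:n\in\omega\}$ of open subsets of $X$ with $D_n\subseteq V_n$ for all $n$ and $\bigcap_n V_n=\emptyset$. *)

theory Defs
  imports "HOL-Analysis.Analysis"
begin

definition delta_space :: "'a::topological_space itself \<Rightarrow> bool" where
  "delta_space _ \<longleftrightarrow>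
     (\<forall>D :: nat \<Rightarrow> 'a set. decseq D \<and> (\<Inter>n. D n) = {} \<longrightarrow>
        (\<exists>V :: nat \<Rightarrow> 'a set. decseq V \<and> (\<forall>n. open (V n) \<and> D n \<subseteq> V n) \<and> (\<Inter>n. V n) = {}))"

definition grothendieck :: "'a::real_normed_vector itself \<Rightarrow> bool" where
  "grothendieck _ \<longleftrightarrow>
     (\<forall>(f :: nat \<Rightarrow> ('a \<Rightarrow>\<^sub>L real)) g.
        (\<forall>x. (\<lambda>n. blinfun_apply (f n) x) \<longlonglongrightarrow> blinfun_apply g x) \<longrightarrow>
        (\<forall>\<phi> :: ('a \<Rightarrow>\<^sub>L real) \<Rightarrow>\<^sub>L real. (\<lambda>n. blinfun_apply \<phi> (f n)) \<longlonglongrightarrow> blinfun_apply \<phi> g))"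

end

theory Submission
  imports Defs
begin

text \<open>
  If bounded continuous functions h_k with disjoint supports satisfy h_k(p_j) = \<delta>_jk and
  vanish at the limit x of the sequence p, then \<mu> \<mapsto> \<Sum>_k \<mu>(h_k) is a bounded functional on
  C(X)* taking the value 1 at every \<delta>_(p_n) - \<delta>_x, although these functionals converge weak* to 0.
  So C(X) is not Grothendieck as soon as X has a nontrivial convergent sequence whose terms can be
  separated by such bumps. In a compact Hausdorff space Urysohn's lemma provides the bumps, and an
  infinite compact Hausdorff space has a nontrivial convergent sequence once it is scattered. A
  \<Delta>-space is scattered: a nonempty perfect closed set would map continuously onto the Cantor cube
  {0,1}^\<omega>, the \<Delta>-property passes to such images, but it fails for the Cantor cube by the Baire
  category theorem, applied to the dense sets of finitely supported points with a 1 beyond position n.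

  In [0, \<omega>_1] the points n < \<omega> are isolated and converge to \<omega>, so C[0, \<omega>_1] is not
  Grothendieck. Yet [0, \<omega>_1] is not a \<Delta>-space: an Ulam matrix yields countably many pairwise
  disjoint stationary sets S_j, and open sets V_n covering the decreasing sets \<Union>(j \<ge> n) S_j cannot
  have empty intersection, since the complement of some V_n would be a closed unbounded set, which
  would have to meet the stationary set S_n.
\<close>

section \<open>Disjoint bumps and the Grothendieck property\<close>

lemma apply_bcontfun_sum:
  fixes F :: "nat \<Rightarrow> ('a::topological_space \<Rightarrow>\<^sub>C 'b::real_normed_vector)"
  shows "apply_bcontfun (sum F A) t = (\<Sum>k\<in>A. apply_bcontfun (F k) t)"
  by (induction A rule: infinite_finite_induct) auto

lemma bounded_linear_apply_bcontfun:
  "bounded_linear (\<lambda>F::'a::topological_space \<Rightarrow>\<^sub>C 'b::real_normed_vector. apply_bcontfun F t)"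
proof (rule bounded_linear_intro[where K=1])
  show "norm (apply_bcontfun F t) \<le> norm F * 1" for F :: "'a \<Rightarrow>\<^sub>C 'b"
    using norm_bounded[of F t] by simp
qed auto

lemma norm_sum_disjoint_bumps_le:
  fixes H :: "nat \<Rightarrow> ('a::topological_space \<Rightarrow>\<^sub>C real)"
  assumes bnd: "\<And>k t. \<bar>H k t\<bar> \<le> 1" and disj: "\<And>j k t. j \<noteq> k \<Longrightarrow> H j t = 0 \<or> H k t = 0"
    and c: "\<And>k. \<bar>c k\<bar> \<le> 1"
  shows "norm (\<Sum>k<N. c k *\<^sub>R H k) \<le> 1"
proof (rule norm_bound)
  fix t
  have "\<bar>\<Sum>k<N. c k * H k t\<bar> \<le> 1"
  proof (cases "\<exists>k0<N. H k0 t \<noteq> 0")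
    case True
    then obtain k0 where k0: "k0 < N" "H k0 t \<noteq> 0" by blast
    have "(\<Sum>k<N. c k * H k t) = (\<Sum>k<N. if k = k0 then c k0 * H k0 t else 0)"
      by (rule sum.cong) (use disj k0 in auto)
    also have "\<dots> = c k0 * H k0 t" using k0 by simp
    finally have "(\<Sum>k<N. c k * H k t) = c k0 * H k0 t" .
    then show ?thesis using c[of k0] bnd[of k0 t] by (simp add: abs_mult mult_le_one)
  qed auto
  then show "norm (apply_bcontfun (\<Sum>k<N. c k *\<^sub>R H k) t) \<le> 1"
    by (simp add: apply_bcontfun_sum)
qed

lemma sum_abs_blinfun_disjoint_bumps_le:
  fixes H :: "nat \<Rightarrow> ('a::topological_space \<Rightarrow>\<^sub>C real)" and \<mu> :: "('a \<Rightarrow>\<^sub>C real) \<Rightarrow>\<^sub>L real"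
  assumes bnd: "\<And>k t. \<bar>H k t\<bar> \<le> 1" and disj: "\<And>j k t. j \<noteq> k \<Longrightarrow> H j t = 0 \<or> H k t = 0"
  shows "(\<Sum>k<N. \<bar>\<mu> (H k)\<bar>) \<le> norm \<mu>"
proof -
  define c where "c k = sgn (\<mu> (H k))" for k
  have "(\<Sum>k<N. \<bar>\<mu> (H k)\<bar>) = \<mu> (\<Sum>k<N. c k *\<^sub>R H k)"
    by (simp add: c_def blinfun.sum_right blinfun.scaleR_right abs_sgn mult.commute)
  also have "\<dots> \<le> norm \<mu> * norm (\<Sum>k<N. c k *\<^sub>R H k)"
    using norm_blinfun[of \<mu>] abs_ge_self order_trans unfolding real_norm_def by blast
  also have "\<dots> \<le> norm \<mu>"
    using norm_sum_disjoint_bumps_le[OF bnd disj, where c=c and N=N]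
    by (simp add: c_def sgn_real_def mult_left_le)
  finally show ?thesis .
qed

lemma ex_blinfun_suminf_disjoint_bumps:
  fixes H :: "nat \<Rightarrow> ('a::topological_space \<Rightarrow>\<^sub>C real)"
  assumes bnd: "\<And>k t. \<bar>H k t\<bar> \<le> 1" and disj: "\<And>j k t. j \<noteq> k \<Longrightarrow> H j t = 0 \<or> H k t = 0"
  obtains \<phi> :: "(('a \<Rightarrow>\<^sub>C real) \<Rightarrow>\<^sub>L real) \<Rightarrow>\<^sub>L real" where "\<And>\<mu>. \<phi> \<mu> = (\<Sum>k. \<mu> (H k))"
proof -
  note partial_sums_bounded = sum_abs_blinfun_disjoint_bumps_le[OF bnd disj]
  have summable_abs: "summable (\<lambda>k. \<bar>\<mu> (H k)\<bar>)" for \<mu> :: "('a \<Rightarrow>\<^sub>C real) \<Rightarrow>\<^sub>L real"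
    by (rule summableI_nonneg_bounded[where x="norm \<mu>"]) (use partial_sums_bounded in auto)
  then have summable: "summable (\<lambda>k. \<mu> (H k))" for \<mu> :: "('a \<Rightarrow>\<^sub>C real) \<Rightarrow>\<^sub>L real"
    by (rule summable_rabs_cancel)
  have "bounded_linear (\<lambda>\<mu>::('a \<Rightarrow>\<^sub>C real) \<Rightarrow>\<^sub>L real. \<Sum>k. \<mu> (H k))"
  proof (rule bounded_linear_intro[where K=1])
    fix \<mu> \<nu> :: "('a \<Rightarrow>\<^sub>C real) \<Rightarrow>\<^sub>L real" and r :: real
    show "(\<Sum>k. (\<mu> + \<nu>) (H k)) = (\<Sum>k. \<mu> (H k)) + (\<Sum>k. \<nu> (H k))"
      by (simp add: blinfun.add_left suminf_add[OF summable[of \<mu>] summable[of \<nu>]])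
    show "(\<Sum>k. (r *\<^sub>R \<mu>) (H k)) = r *\<^sub>R (\<Sum>k. \<mu> (H k))"
      by (simp add: blinfun.scaleR_left suminf_mult[OF summable])
    have "\<bar>\<Sum>k. \<mu> (H k)\<bar> \<le> (\<Sum>k. \<bar>\<mu> (H k)\<bar>)"
      by (rule summable_rabs[OF summable_abs])
    also have "\<dots> \<le> norm \<mu>"
      by (rule suminf_le_const[OF summable_abs partial_sums_bounded])
    finally show "norm (\<Sum>k. \<mu> (H k)) \<le> norm \<mu> * 1" by simp
  qed
  then show ?thesis
    by (intro that[of "Blinfun (\<lambda>\<mu>. \<Sum>k. blinfun_apply \<mu> (H k))"]) (simp add: bounded_linear_Blinfun_apply)
qed

lemma bcontfun_not_grothendieck_if_disjoint_bumps:
  fixes p :: "nat \<Rightarrow> 'a::topological_space" and h :: "nat \<Rightarrow> 'a \<Rightarrow> real"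
  assumes cont: "\<And>k. continuous_on UNIV (h k)" and bnd: "\<And>k t. \<bar>h k t\<bar> \<le> 1"
    and disj: "\<And>j k t. j \<noteq> k \<Longrightarrow> h j t = 0 \<or> h k t = 0"
    and hp: "\<And>k j. h k (p j) = (if j = k then 1 else 0)" and hx: "\<And>k. h k x = 0"
    and lim: "p \<longlonglongrightarrow> x"
  shows "\<not> grothendieck TYPE('a \<Rightarrow>\<^sub>C real)"
proof
  assume "grothendieck TYPE('a \<Rightarrow>\<^sub>C real)"
  define H where "H k = Bcontfun (h k)" for k
  have H_apply: "apply_bcontfun (H k) = h k" for k
    using bcontfun_normI[OF cont, of k 1] bnd by (simp add: H_def Bcontfun_inverse)
  obtain \<phi> :: "(('a \<Rightarrow>\<^sub>C real) \<Rightarrow>\<^sub>L real) \<Rightarrow>\<^sub>L real"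
    where \<phi>: "\<And>\<mu>. \<phi> \<mu> = (\<Sum>k. \<mu> (H k))"
    by (rule ex_blinfun_suminf_disjoint_bumps[of H]) (use bnd disj in \<open>auto simp: H_apply\<close>)
  define ev where "ev t = Blinfun (\<lambda>F::'a \<Rightarrow>\<^sub>C real. apply_bcontfun F t)" for t
  have ev_apply: "ev t F = F t" for t F
    by (simp add: ev_def bounded_linear_Blinfun_apply[OF bounded_linear_apply_bcontfun])
  define f where "f n = ev (p n) - ev x" for n
  have "(\<lambda>n. f n F) \<longlonglongrightarrow> blinfun_apply 0 F" for F
  proof -
    have "(\<lambda>n. F (p n)) \<longlonglongrightarrow> F x"
      by (rule continuous_on_tendsto_compose[OF continuous_on_apply_bcontfun[of UNIV] lim]) auto
    then have "(\<lambda>n. F (p n) - F x) \<longlonglongrightarrow> 0"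
      by (simp add: LIM_zero)
    then show ?thesis by (simp add: f_def ev_apply blinfun.diff_left)
  qed
  with \<open>grothendieck TYPE('a \<Rightarrow>\<^sub>C real)\<close> have "(\<lambda>n. \<phi> (f n)) \<longlonglongrightarrow> blinfun_apply \<phi> 0"
    unfolding grothendieck_def by blast
  moreover have "\<phi> (f n) = 1" for n
  proof -
    have "(\<lambda>k. f n (H k)) = (\<lambda>k. if k = n then 1 else 0)"
      by (auto simp: f_def blinfun.diff_left ev_apply H_apply hp hx)
    then show ?thesis
      using sums_single[of n "\<lambda>_. 1::real"] by (simp add: \<phi> sums_iff)
  qed
  ultimately show False by (simp add: LIMSEQ_const_iff)
qed

section \<open>Convergent sequences in compact Hausdorff spaces\<close>

lemma Hausdorff_space_euclidean_t2: "Hausdorff_space (euclidean :: 'a::t2_space topology)"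
  unfolding Hausdorff_space_def disjnt_def using hausdorff by (simp add: open_openin[symmetric]) blast

lemma compact_t2_bump_function:
  fixes U :: "'a::t2_space set"
  assumes "compact (UNIV :: 'a set)" "open U" "q \<in> U"
  obtains g :: "'a \<Rightarrow> real" where "continuous_on UNIV g" "\<And>t. 0 \<le> g t \<and> g t \<le> 1"
    "g q = 1" "\<And>t. t \<notin> U \<Longrightarrow> g t = 0"
proof -
  have "normal_space (euclidean :: 'a topology)"
    by (rule compact_Hausdorff_or_regular_imp_normal_space)
       (use assms Hausdorff_space_euclidean_t2 in \<open>auto simp: compact_space_def\<close>)
  moreover have "closedin euclidean (-U)" "closedin euclidean {q}" "disjnt (-U) {q}"
    using assms(2,3) by (auto simp: closed_closedin[symmetric] disjnt_def)
  ultimately obtain g where g: "continuous_map euclidean (top_of_set {0..1::real}) g"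
    "g ` (-U) \<subseteq> {0}" "g ` {q} \<subseteq> {1}"
    using Urysohn_lemma[of euclidean "-U" "{q}" 0 1] by auto
  have "continuous_on UNIV g" "\<And>t. g t \<in> {0..1}"
    using g(1) by (auto simp: continuous_map_in_subtopology)
  then show ?thesis using that g(2,3) by auto
qed

lemma compact_t2_closure_nbhd:
  fixes U :: "'a::t2_space set"
  assumes "compact (UNIV :: 'a set)" "open U" "x \<in> U"
  obtains A where "open A" "x \<in> A" "closure A \<subseteq> U"
proof -
  obtain g :: "'a \<Rightarrow> real" where g: "continuous_on UNIV g" "g x = 1" "\<And>t. t \<notin> U \<Longrightarrow> g t = 0"
    using compact_t2_bump_function[OF assms] by metis
  have "open (g -` {1/2<..})" "closed (g -` {1/2..})"
    using g(1) by (auto intro: open_vimage closed_vimage)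
  moreover have "closure (g -` {1/2<..}) \<subseteq> g -` {1/2..}"
    by (intro closure_minimal calculation(2)) auto
  ultimately show ?thesis
    using that[of "g -` {1/2<..}"] g(2,3) by force
qed

lemma convergent_seq_separate_term:
  fixes p :: "nat \<Rightarrow> 'a::t2_space"
  assumes "\<And>n. p n \<noteq> x" "p \<longlonglongrightarrow> x" "open W" "x \<in> W"
  obtains n A B where "i < n" "open A" "open B" "A \<inter> B = {}" "p n \<in> A" "x \<in> B" "A \<subseteq> W" "B \<subseteq> W"
proof -
  have "eventually (\<lambda>n. p n \<in> W) sequentially"
    using assms(2-4) by (rule topological_tendstoD)
  then obtain N where N: "\<And>n. n \<ge> N \<Longrightarrow> p n \<in> W"
    by (auto simp: eventually_sequentially)
  define n where "n = max N (Suc i)"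
  obtain A B where AB: "open A" "open B" "p n \<in> A" "x \<in> B" "A \<inter> B = {}"
    using hausdorff[OF assms(1)[of n]] by blast
  show ?thesis
  proof (rule that[of n "A \<inter> W" "B \<inter> W"])
    show "p n \<in> A \<inter> W" using AB N[of n] by (simp add: n_def)
  qed (use AB assms(3,4) in \<open>auto simp: n_def\<close>)
qed

lemma convergent_seq_disjoint_nbhds:
  fixes p :: "nat \<Rightarrow> 'a::t2_space"
  assumes px: "\<And>n. p n \<noteq> x" and lim: "p \<longlonglongrightarrow> x"
  obtains r :: "nat \<Rightarrow> nat" and U :: "nat \<Rightarrow> 'a set"
  where "strict_mono r" "\<And>k. open (U k)" "\<And>k. p (r k) \<in> U k" "\<And>k. x \<notin> U k"
    "\<And>j k. j \<noteq> k \<Longrightarrow> U j \<inter> U k = {}"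
proof -
  \<comment> \<open>Each stage (U, W, i) separates the term p i \<in> U from the point x \<in> W;
    the next stage lives inside W.\<close>
  define good :: "'a set \<times> 'a set \<times> nat \<Rightarrow> bool"
    where "good = (\<lambda>(U, W, i). open U \<and> open W \<and> U \<inter> W = {} \<and> x \<in> W \<and> p i \<in> U)"
  define next_to :: "'a set \<times> 'a set \<times> nat \<Rightarrow> _"
    where "next_to = (\<lambda>(U, W, i) (U', W', i'). U' \<subseteq> W \<and> W' \<subseteq> W \<and> i < i')"
  have step: "\<exists>s'. good s' \<and> next_to (U, W, i) s'" if W: "open W" "x \<in> W" for U W i
  proof -
    obtain n A B where "i < n" "open A" "open B" "A \<inter> B = {}" "p n \<in> A" "x \<in> B" "A \<subseteq> W" "B \<subseteq> W"
      using convergent_seq_separate_term[OF px lim W] .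
    then have "good (A, B, n) \<and> next_to (U, W, i) (A, B, n)" by (simp add: good_def next_to_def)
    then show ?thesis ..
  qed
  have "\<exists>f. \<forall>n. good (f n) \<and> next_to (f n) (f (Suc n))"
  proof (rule dependent_nat_choice)
    show "\<exists>s. good s" using step[of UNIV] by blast
    show "\<exists>s'. good s' \<and> next_to s s'" if "good s" for s n
      using that step by (cases s) (auto simp: good_def)
  qed
  then obtain f where f: "\<And>n. good (f n)" "\<And>n. next_to (f n) (f (Suc n))" by blast
  define U where "U n = fst (f n)" for n
  define W where "W n = fst (snd (f n))" for n
  define r where "r n = snd (snd (f n))" for n
  have f': "open (U n)" "U n \<inter> W n = {}" "x \<in> W n" "p (r n) \<in> U n"
    "U (Suc n) \<subseteq> W n" "W (Suc n) \<subseteq> W n" "r n < r (Suc n)" for n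
    using f[of n] by (auto simp: good_def next_to_def U_def W_def r_def split: prod.splits)
  have "U j \<inter> U k = {}" if "j < k" for j k
  proof -
    obtain k' where k': "k = Suc k'" using \<open>j < k\<close> by (cases k) auto
    have "W k' \<subseteq> W j" using f'(6) \<open>j < k\<close> k' by (intro decseqD[of W]) (auto intro: decseq_SucI)
    then show ?thesis using f'(2,5) k' by blast
  qed
  then have "U j \<inter> U k = {}" if "j \<noteq> k" for j k
    using that by (metis inf_commute linorder_neqE_nat)
  moreover have "x \<notin> U k" for k using f'(2,3) by blast
  ultimately show ?thesis
    using that[of r U] f'(1,4,7) by (simp add: strict_mono_Suc_iff)
qed

lemma compact_t2_convergent_seq_not_grothendieck:
  fixes p :: "nat \<Rightarrow> 'a::t2_space"
  assumes cpt: "compact (UNIV :: 'a set)" and px: "\<And>n. p n \<noteq> x" and lim: "p \<longlonglongrightarrow> x"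
  shows "\<not> grothendieck TYPE('a \<Rightarrow>\<^sub>C real)"
proof -
  obtain r :: "nat \<Rightarrow> nat" and U where r: "strict_mono r" and U: "\<And>k. open (U k)" "\<And>k. p (r k) \<in> U k"
    "\<And>k. x \<notin> U k" and disj: "\<And>j k. j \<noteq> k \<Longrightarrow> U j \<inter> U k = {}"
    using convergent_seq_disjoint_nbhds[OF px lim] by blast
  have "\<exists>g :: 'a \<Rightarrow> real. continuous_on UNIV g \<and> (\<forall>t. 0 \<le> g t \<and> g t \<le> 1) \<and>
      g (p (r k)) = 1 \<and> (\<forall>t. t \<notin> U k \<longrightarrow> g t = 0)" for k
    using compact_t2_bump_function[OF cpt U(1,2)] by metis
  then obtain h :: "nat \<Rightarrow> 'a \<Rightarrow> real" where h: "\<And>k. continuous_on UNIV (h k)"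
    "\<And>k t. 0 \<le> h k t \<and> h k t \<le> 1" "\<And>k. h k (p (r k)) = 1" "\<And>k t. t \<notin> U k \<Longrightarrow> h k t = 0"
    by metis
  show ?thesis
  proof (rule bcontfun_not_grothendieck_if_disjoint_bumps[where p="p \<circ> r" and x=x and h=h])
    show "\<bar>h k t\<bar> \<le> 1" for k t using h(2)[of k t] by simp
    show "h j t = 0 \<or> h k t = 0" if "j \<noteq> k" for j k t
      using disj[OF that] h(4) by blast
    show "h k ((p \<circ> r) j) = (if j = k then 1 else 0)" for k j
      using disj[of j k] U(2)[of j] h(3,4) by auto
    show "h k x = 0" for k using U(3) h(4) by blast
    show "(p \<circ> r) \<longlonglongrightarrow> x" using LIMSEQ_subseq_LIMSEQ[OF lim r] .
  qed (rule h(1))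
qed

lemma compact_isolated_points_finite:
  assumes "compact S" "\<And>y. y \<in> S \<Longrightarrow> open {y}"
  shows "finite S"
proof -
  obtain C where "C \<subseteq> S" "finite C" "S \<subseteq> (\<Union>c\<in>C. {c})"
    using compactE_image[OF assms(1), of S "\<lambda>y. {y}"] assms(2) by blast
  then show ?thesis by (metis UN_singleton finite_subset)
qed

lemma compact_t2_scattered_convergent_seq:
  assumes cpt: "compact (UNIV :: 'a::t2_space set)" and inf: "infinite (UNIV :: 'a set)"
    and scattered: "\<And>P::'a set. closed P \<Longrightarrow> P \<noteq> {} \<Longrightarrow> \<exists>x\<in>P. \<exists>U. open U \<and> U \<inter> P = {x}"
  obtains p :: "nat \<Rightarrow> 'a::t2_space" and x :: 'a where "\<And>n. p n \<noteq> x" "p \<longlonglongrightarrow> x"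
proof -
  define P where "P = {x::'a. \<not> open {x}}"
  have "- P = (\<Union>x\<in>-P. {x})" by auto
  then have "closed P"
    by (metis closed_open open_UN ComplD P_def mem_Collect_eq)
  moreover have "P \<noteq> {}"
    using compact_isolated_points_finite[OF cpt] inf by (auto simp: P_def)
  ultimately obtain x U where x: "x \<in> P" "open U" "U \<inter> P = {x}"
    using scattered[of P] by blast
  \<comment> \<open>x is the only non-isolated point of the compact set closure A, so every neighbourhood
    of x contains almost all of A.\<close>
  obtain A where A: "open A" "x \<in> A" "closure A \<subseteq> U"
    using compact_t2_closure_nbhd[OF cpt x(2)] x(3) by blast
  have "infinite (A - {x})"
  proof
    assume "finite (A - {x})"
    then have "open (A - (A - {x}))" using A(1) by (intro open_Diff finite_imp_closed)
    moreover have "A - (A - {x}) = {x}" using A(2) by auto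
    ultimately show False using x(1) by (simp add: P_def)
  qed
  then obtain p :: "nat \<Rightarrow> 'a" where p: "inj p" "range p \<subseteq> A - {x}"
    using infinite_countable_subset by blast
  have "p \<longlonglongrightarrow> x"
  proof (rule topological_tendstoI)
    fix S assume S: "open S" "x \<in> S"
    have "compact (closure A - S)"
      using compact_Int_closed[OF cpt closed_Diff[OF closed_closure S(1)]] by simp
    moreover have "open {y}" if "y \<in> closure A - S" for y
      using that A(3) S(2) x(3) by (auto simp: P_def)
    ultimately have "finite (closure A - S)"
      by (rule compact_isolated_points_finite)
    then have "finite (p -` (closure A - S))"
      using p(1) by (rule finite_vimageI)
    moreover have "{n. p n \<notin> S} \<subseteq> p -` (closure A - S)"
      using p(2) closure_subset[of A] by auto
    ultimately have "finite {n. p n \<notin> S}"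
      by (rule finite_subset[rotated])
    then show "eventually (\<lambda>n. p n \<in> S) sequentially"
      by (simp add: eventually_cofinite cofinite_eq_sequentially[symmetric])
  qed
  moreover have "p n \<noteq> x" for n using p(2) by auto
  ultimately show ?thesis using that by blast
qed

section \<open>The Cantor cube and \<Delta>-spaces\<close>

lemma tendsto_fun_coordinatewise_iff:
  fixes f :: "'c \<Rightarrow> 'i \<Rightarrow> 'b::topological_space"
  shows "(f \<longlongrightarrow> l) F \<longleftrightarrow> (\<forall>i. ((\<lambda>c. f c i) \<longlongrightarrow> l i) F)"
  using limitin_componentwise[of "\<lambda>_. euclidean" UNIV f l F]
  by (simp add: euclidean_product_topology)

text \<open>The Cantor cube is modelled inside the real sequence space, so that the product topology and
  its complete metric are available.\<close>

definition cantor_cube :: "(nat \<Rightarrow> real) set" where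
  "cantor_cube = {y. \<forall>n. y n \<in> {0, 1}}"

definition cantor_tail :: "nat \<Rightarrow> (nat \<Rightarrow> real) set" where
  "cantor_tail n = {y \<in> cantor_cube. (\<exists>N. \<forall>k\<ge>N. y k = 0) \<and> (\<exists>k\<ge>n. y k = 1)}"

lemma closed_cantor_cube: "closed cantor_cube"
proof -
  have "cantor_cube = (\<Inter>n. (\<lambda>y. y n) -` {0, 1})" by (auto simp: cantor_cube_def)
  moreover have "closed ((\<lambda>y::nat \<Rightarrow> real. y n) -` {0, 1})" for n
    by (rule closed_vimage) (auto intro: continuous_on_product_coordinates)
  ultimately show ?thesis by (metis closed_INT)
qed

lemma cantor_cube_subset_closure_tail: "cantor_cube \<subseteq> closure (cantor_tail n)"
proof
  fix y assume y: "y \<in> cantor_cube"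
  define z where "z M k = (if k < M then y k else if k = M + n then 1 else 0)" for M k
  have "z M \<in> cantor_tail n" for M
  proof -
    have "z M \<in> cantor_cube" using y by (simp add: cantor_cube_def z_def)
    moreover have "\<forall>k\<ge>Suc (M + n). z M k = 0" "M + n \<ge> n \<and> z M (M + n) = 1"
      by (simp_all add: z_def)
    ultimately show ?thesis unfolding cantor_tail_def by blast
  qed
  moreover have "z \<longlonglongrightarrow> y"
  proof (unfold tendsto_fun_coordinatewise_iff, rule allI)
    fix k
    have "eventually (\<lambda>M. z M k = y k) sequentially"
      by (rule eventually_sequentiallyI[of "Suc k"]) (simp add: z_def)
    then show "(\<lambda>M. z M k) \<longlonglongrightarrow> y k"
      by (rule tendsto_eventually)
  qed
  ultimately show "y \<in> closure (cantor_tail n)"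
    by (auto simp: closure_sequential)
qed

lemma decseq_cantor_tail: "decseq cantor_tail"
  unfolding cantor_tail_def by (rule decseq_SucI) (auto intro: Suc_leD)

lemma Inter_cantor_tail: "(\<Inter>n. cantor_tail n) = {}"
  by (auto simp: cantor_tail_def) (metis zero_neq_one)

lemma cantor_tail_open_supersets_Inter_nonempty:
  assumes W: "\<And>n. openin (top_of_set cantor_cube) (W n)" "\<And>n. cantor_tail n \<subseteq> W n"
  shows "(\<Inter>n. W n) \<noteq> {}"
proof -
  have W_dense: "(top_of_set cantor_cube) closure_of (W n) = cantor_cube" for n
  proof -
    have "cantor_cube \<subseteq> closure (W n)"
      using cantor_cube_subset_closure_tail closure_mono[OF W(2)] by blast
    moreover have "W n \<subseteq> cantor_cube" using openin_imp_subset[OF W(1)] by simp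
    ultimately show ?thesis by (auto simp: closure_of_subtopology Int_absorb1)
  qed
  have "(top_of_set cantor_cube) closure_of \<Inter>(range W) = topspace (top_of_set cantor_cube)"
  proof (rule Baire_category)
    show "completely_metrizable_space (top_of_set cantor_cube) \<or>
        locally_compact_space (top_of_set cantor_cube) \<and> regular_space (top_of_set cantor_cube)"
      using completely_metrizable_space_closedin[OF completely_metrizable_space_euclidean]
        closed_cantor_cube by (simp add: closed_closedin[symmetric]) blast
  qed (use W(1) W_dense in auto)
  moreover have "(\<lambda>_. 0) \<in> cantor_cube" by (simp add: cantor_cube_def)
  ultimately show ?thesis by auto
qed

lemma delta_space_image_separation:
  fixes g :: "'a::topological_space \<Rightarrow> 'b::t2_space"
  assumes delta: "delta_space TYPE('a)" and cpt: "compact (UNIV :: 'a set)"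
    and K: "closed K" and g: "continuous_on K g"
    and D: "decseq D" "(\<Inter>n. D n) = {}" "\<And>n. D n \<subseteq> g ` K"
  obtains W where "\<And>n. openin (top_of_set (g ` K)) (W n)" "\<And>n. D n \<subseteq> W n" "(\<Inter>n. W n) = {}"
proof -
  define D' where "D' n = K \<inter> g -` D n" for n
  have "decseq D'" using D(1) unfolding D'_def decseq_def by blast
  moreover have "(\<Inter>n. D' n) = {}" using D(2) unfolding D'_def by blast
  ultimately have "\<exists>V. decseq V \<and> (\<forall>n. open (V n) \<and> D' n \<subseteq> V n) \<and> (\<Inter>n. V n) = {}"
    using delta unfolding delta_space_def by blast
  then obtain V where V: "\<And>n. open (V n)" "\<And>n. D' n \<subseteq> V n" "(\<Inter>n. V n) = {}"
    by blast
  \<comment> \<open>The image of the compact set K - V n is closed, so its complement in g ` K is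
    relatively open.\<close>
  define W where "W n = g ` K - g ` (K - V n)" for n
  have "closed (g ` (K - V n))" for n
  proof -
    have "compact (K - V n)"
      using compact_Int_closed[OF cpt closed_Diff[OF K V(1)]] by simp
    moreover have "continuous_on (K - V n) g" using g by (rule continuous_on_subset) auto
    ultimately show ?thesis by (intro compact_imp_closed compact_continuous_image)
  qed
  then have "openin (top_of_set (g ` K)) (W n)" for n
    by (auto simp: W_def Diff_eq openin_open_Int open_Compl)
  moreover have "D n \<subseteq> W n" for n
    using D(3) V(2)[of n] by (auto simp: W_def D'_def)
  moreover have "(\<Inter>n. W n) = {}"
  proof -
    have "g x \<notin> W n" if "x \<in> K" "x \<notin> V n" for x n
      using that by (auto simp: W_def)
    then show ?thesis using V(3) by (fastforce simp: W_def)
  qed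
  ultimately show ?thesis using that by blast
qed

lemma delta_space_no_map_onto_cantor_cube:
  fixes K :: "'a::topological_space set"
  assumes delta: "delta_space TYPE('a)" and cpt: "compact (UNIV :: 'a set)"
    and K: "closed K" and g: "continuous_on K g"
  shows "g ` K \<noteq> cantor_cube"
proof
  assume onto: "g ` K = cantor_cube"
  have "cantor_tail n \<subseteq> g ` K" for n
    using onto by (auto simp: cantor_tail_def)
  then obtain W where "\<And>n. openin (top_of_set cantor_cube) (W n)" "\<And>n. cantor_tail n \<subseteq> W n"
    "(\<Inter>n. W n) = {}"
    using delta_space_image_separation[OF delta cpt K g decseq_cantor_tail Inter_cantor_tail]
    unfolding onto by blast
  then show False using cantor_tail_open_supersets_Inter_nonempty by blast
qed

section \<open>Perfect sets map onto the Cantor cube\<close>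

lemma perfect_set_split_open:
  fixes P :: "'a::t2_space set"
  assumes cpt: "compact (UNIV :: 'a set)" and perfect: "\<And>x U. x \<in> P \<Longrightarrow> open U \<Longrightarrow> U \<inter> P \<noteq> {x}"
    and U: "open U" "U \<inter> P \<noteq> {}"
  obtains A B where "open A" "open B" "A \<inter> P \<noteq> {}" "B \<inter> P \<noteq> {}"
    "closure A \<subseteq> U" "closure B \<subseteq> U" "closure A \<inter> closure B = {}"
proof -
  obtain a where a: "a \<in> U \<inter> P" using U(2) by blast
  then obtain b where b: "b \<in> U \<inter> P" "b \<noteq> a" using perfect[of a U] U(1) by blast
  obtain A0 B0 where AB0: "open A0" "open B0" "a \<in> A0" "b \<in> B0" "A0 \<inter> B0 = {}"
    using hausdorff[OF b(2)[symmetric]] by blast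
  obtain A where A: "open A" "a \<in> A" "closure A \<subseteq> A0 \<inter> U"
    using compact_t2_closure_nbhd[OF cpt, of "A0 \<inter> U" a] AB0 U(1) a by blast
  obtain B where B: "open B" "b \<in> B" "closure B \<subseteq> B0 \<inter> U"
    using compact_t2_closure_nbhd[OF cpt, of "B0 \<inter> U" b] AB0 U(1) b by blast
  show ?thesis
    by (rule that[OF A(1) B(1)]) (use A B AB0 a b in auto)
qed

lemma perfect_set_cantor_scheme:
  fixes P :: "'a::t2_space set"
  assumes cpt: "compact (UNIV :: 'a set)" and ne: "P \<noteq> {}"
    and perfect: "\<And>x U. x \<in> P \<Longrightarrow> open U \<Longrightarrow> U \<inter> P \<noteq> {x}"
  obtains C :: "bool list \<Rightarrow> 'a set" where "\<And>s. C s \<inter> P \<noteq> {}"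
    "\<And>b s. closure (C (b # s)) \<subseteq> C s" "\<And>s. closure (C (True # s)) \<inter> closure (C (False # s)) = {}"
proof -
  define good where "good U AB \<longleftrightarrow> open (fst AB) \<and> open (snd AB) \<and> fst AB \<inter> P \<noteq> {} \<and> snd AB \<inter> P \<noteq> {}
      \<and> closure (fst AB) \<subseteq> U \<and> closure (snd AB) \<subseteq> U \<and> closure (fst AB) \<inter> closure (snd AB) = {}"
    for U :: "'a set" and AB :: "'a set \<times> 'a set"
  define split where "split U = (SOME AB. good U AB)" for U
  have split: "good U (split U)" if U: "open U" "U \<inter> P \<noteq> {}" for U
  proof -
    obtain A B where "good U (A, B)"
      using perfect_set_split_open[OF cpt perfect U] unfolding good_def by (metis fst_conv snd_conv)
    then show ?thesis unfolding split_def by (rule someI)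
  qed
  define C where "C = rec_list UNIV (\<lambda>b s Cs. if b then fst (split Cs) else snd (split Cs))"
  have C_Nil: "C [] = UNIV" and C_Cons: "C (b # s) = (if b then fst (split (C s)) else snd (split (C s)))"
    for b s by (simp_all add: C_def)
  have C_good: "open (C s) \<and> C s \<inter> P \<noteq> {}" for s
  proof (induction s)
    case Nil then show ?case using ne by (simp add: C_Nil)
  next
    case (Cons b s)
    then show ?case using split[of "C s"] by (cases b) (auto simp: C_Cons good_def)
  qed
  then have "good (C s) (split (C s))" for s by (simp add: split)
  then show ?thesis
    by (intro that[of C]) (auto simp: C_good C_Cons good_def)
qed

lemma cantor_scheme_closure_disjoint:
  assumes nested: "\<And>b s. closure (C (b # s)) \<subseteq> C s"
    and split: "\<And>s. closure (C (True # s)) \<inter> closure (C (False # s)) = {}"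
  shows "length s = length t \<Longrightarrow> s \<noteq> t \<Longrightarrow> closure (C s) \<inter> closure (C t) = {}"
proof (induction s arbitrary: t)
  case Nil then show ?case by simp
next
  case (Cons b s)
  then obtain c t' where t: "t = c # t'" "length s = length t'" by (cases t) auto
  have sub: "closure (C (b # s)) \<subseteq> closure (C s)" for b s
    using nested closure_subset by blast
  show ?case
  proof (cases "s = t'")
    case True
    then have "b \<noteq> c" using Cons.prems t by simp
    then show ?thesis using split[of s] True t by (cases b; cases c) auto
  next
    case False
    then show ?thesis using Cons.IH[OF t(2)] sub[of b s] sub[of c t'] t by blast
  qed
qed

lemma cantor_scheme_branch_point:
  fixes C :: "bool list \<Rightarrow> 'a::topological_space set"
  assumes cpt: "compact (UNIV :: 'a set)" and P: "closed P" "\<And>s. C s \<inter> P \<noteq> {}"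
    and nested: "\<And>b s. closure (C (b # s)) \<subseteq> C s"
  obtains x where "x \<in> P" "\<And>n. x \<in> closure (C (map \<beta> (rev [0..<n])))"
proof -
  define F where "F n = P \<inter> closure (C (map \<beta> (rev [0..<n])))" for n
  have "(\<Inter>n. F n) \<noteq> {}"
  proof (rule compact_space_imp_nest)
    show "compact_space (euclidean :: 'a topology)" using cpt by (simp add: compact_space_def)
    show "closedin euclidean (F n)" for n
      using P(1) by (simp add: F_def closed_closedin[symmetric] closed_Int)
    show "F n \<noteq> {}" for n using P(2) closure_subset by (fastforce simp: F_def)
    show "decseq F"
      using nested closure_subset by (intro decseq_SucI) (fastforce simp: F_def)
  qed
  then show ?thesis using that by (auto simp: F_def)
qed

lemma perfect_set_maps_onto_cantor_cube:
  fixes P :: "'a::t2_space set"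
  assumes cpt: "compact (UNIV :: 'a set)" and P: "closed P" "P \<noteq> {}"
    and perfect: "\<And>x U. x \<in> P \<Longrightarrow> open U \<Longrightarrow> U \<inter> P \<noteq> {x}"
  obtains K :: "'a set" and g where "closed K" "continuous_on K g" "g ` K = cantor_cube"
proof -
  obtain C where C_meets: "\<And>s. C s \<inter> P \<noteq> {}"
    and nested: "\<And>b s. closure (C (b # s)) \<subseteq> C s"
    and split: "\<And>s. closure (C (True # s)) \<inter> closure (C (False # s)) = {}"
    using perfect_set_cantor_scheme[OF cpt P(2) perfect] by blast
  have fin: "finite {s::bool list. length s = n}" for n
    using finite_lists_length_eq[of "UNIV::bool set" n] by simp
  \<comment> \<open>A point of K lies in the closure of exactly one C s per length; g x n reads off the
    head of the s of length n + 1.\<close>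
  define K where "K = P \<inter> (\<Inter>n. \<Union>s\<in>{s. length s = n}. closure (C s))"
  define A where "A b n = (\<Union>s\<in>{s. length s = n}. closure (C (b # s)))" for b n
  define g where "g x n = (if x \<in> A True n then 1 else 0 :: real)" for x n
  have closed_A: "closed (A b n)" for b n unfolding A_def using fin by (intro closed_UN) auto
  have A_disjoint: "A True n \<inter> A False n = {}" for n
  proof -
    have "x \<notin> closure (C (False # t))" if "x \<in> closure (C (True # s))" "length s = length t" for x s t
      using cantor_scheme_closure_disjoint[OF nested split, where s="True # s" and t="False # t"] that
      by auto
    then show ?thesis unfolding A_def by auto
  qed
  have K_A: "K \<subseteq> A True n \<union> A False n" for n
  proof
    fix x assume "x \<in> K"
    then obtain s where s: "length s = Suc n" "x \<in> closure (C s)" unfolding K_def by blast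
    then obtain b s' where "s = b # s'" "length s' = n" by (auto simp: length_Suc_conv)
    then show "x \<in> A True n \<union> A False n" using s unfolding A_def by (cases b) auto
  qed
  have "closed K"
    unfolding K_def using P(1) fin by (intro closed_Int closed_INT closed_UN) auto
  moreover have "continuous_on K g"
  proof (unfold g_def, rule continuous_on_coordinatewise_then_product)
    fix n
    have "continuous_on (A True n \<union> A False n) (\<lambda>x. if x \<in> A True n then 1 else 0 :: real)"
      by (rule continuous_on_cases[OF closed_A closed_A]) (use A_disjoint in auto)
    then show "continuous_on K (\<lambda>x. if x \<in> A True n then 1 else 0 :: real)"
      by (rule continuous_on_subset) (rule K_A)
  qed
  moreover have "cantor_cube \<subseteq> g ` K"
  proof
    fix y assume y: "y \<in> cantor_cube"
    define \<beta> where "\<beta> n = (y n = 1)" for n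
    obtain x where x: "x \<in> P" "\<And>n. x \<in> closure (C (map \<beta> (rev [0..<n])))"
      using cantor_scheme_branch_point[OF cpt P(1) C_meets nested] by blast
    have "x \<in> (\<Union>s\<in>{s. length s = n}. closure (C s))" for n
      using x(2)[of n] by (intro UN_I[of "map \<beta> (rev [0..<n])"]) auto
    then have "x \<in> K" using x(1) by (simp add: K_def)
    moreover have "g x n = y n" for n
    proof -
      have "x \<in> closure (C (\<beta> n # map \<beta> (rev [0..<n])))" using x(2)[of "Suc n"] by simp
      then have "x \<in> A (\<beta> n) n" unfolding A_def by (intro UN_I[of "map \<beta> (rev [0..<n])"]) auto
      then show ?thesis
        using y A_disjoint[of n] by (cases "\<beta> n") (auto simp: g_def \<beta>_def cantor_cube_def)
    qed
    ultimately show "y \<in> g ` K" by (metis image_eqI ext)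
  qed
  moreover have "g ` K \<subseteq> cantor_cube" by (auto simp: g_def cantor_cube_def)
  ultimately show ?thesis by (intro that[of K g]) auto
qed

lemma compact_t2_delta_space_scattered:
  fixes P :: "'a::t2_space set"
  assumes cpt: "compact (UNIV :: 'a set)" and delta: "delta_space TYPE('a)"
    and P: "closed P" "P \<noteq> {}"
  shows "\<exists>x\<in>P. \<exists>U. open U \<and> U \<inter> P = {x}"
proof (rule ccontr)
  assume no_isolated: "\<not> ?thesis"
  have "U \<inter> P \<noteq> {x}" if "x \<in> P" "open U" for x U
    using no_isolated that by blast
  then obtain K :: "'a set" and g :: "'a \<Rightarrow> nat \<Rightarrow> real"
    where "closed K" "continuous_on K g" "g ` K = cantor_cube"
    by (rule perfect_set_maps_onto_cantor_cube[OF cpt P])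
  then show False using delta_space_no_map_onto_cantor_cube[OF delta cpt] by blast
qed

lemma compact_t2_delta_space_not_grothendieck:
  assumes cpt: "compact (UNIV :: 'a::t2_space set)" and inf: "infinite (UNIV :: 'a set)"
    and delta: "delta_space TYPE('a)"
  shows "\<not> grothendieck TYPE('a \<Rightarrow>\<^sub>C real)"
proof -
  have "\<exists>x\<in>P. \<exists>U. open U \<and> U \<inter> P = {x}" if "closed P" "P \<noteq> {}" for P :: "'a set"
    using compact_t2_delta_space_scattered[OF cpt delta that] .
  then obtain p :: "nat \<Rightarrow> 'a" and x where "\<And>n. p n \<noteq> x" "p \<longlonglongrightarrow> x"
    using compact_t2_scattered_convergent_seq[OF cpt inf] by metis
  then show ?thesis by (rule compact_t2_convergent_seq_not_grothendieck[OF cpt])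
qed

section \<open>The ordinal space [0, \<omega>_1]\<close>

lemma omega1_countable_bounded:
  fixes m :: "'b::{wellorder, linorder_topology}"
  assumes unc: "uncountable {..<m}" and cnt: "\<forall>x<m. countable {..<x}"
    and T: "countable T" "T \<subseteq> {..<m}"
  obtains \<beta> where "\<beta> < m" "\<And>t. t \<in> T \<Longrightarrow> t \<le> \<beta>"
proof -
  have "\<exists>\<beta><m. \<forall>t\<in>T. t \<le> \<beta>"
  proof (rule ccontr)
    assume "\<not> (\<exists>\<beta><m. \<forall>t\<in>T. t \<le> \<beta>)"
    then have "{..<m} \<subseteq> (\<Union>t\<in>T. {..<t})" by (auto simp: not_le)
    moreover have "countable (\<Union>t\<in>T. {..<t})"
      using T cnt by (intro countable_UN) auto
    ultimately show False using unc countable_subset by blast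
  qed
  then show ?thesis using that by blast
qed

lemma omega1_uncountable_imp_unbounded:
  fixes m :: "'b::{wellorder, linorder_topology}"
  assumes cnt: "\<forall>x<m. countable {..<x}" and C: "uncountable (C \<inter> {..<m})" and "\<beta> < m"
  obtains \<gamma> where "\<gamma> \<in> C" "\<beta> < \<gamma>" "\<gamma> < m"
proof -
  have "{..\<beta>} = insert \<beta> {..<\<beta>}" by auto
  then have "countable {..\<beta>}" using cnt \<open>\<beta> < m\<close> by simp
  then have "\<not> C \<inter> {..<m} \<subseteq> {..\<beta>}"
    using C countable_subset by blast
  then show ?thesis using that by (auto simp: subset_eq not_le)
qed

lemma omega1_unbounded_imp_uncountable:
  fixes m :: "'b::{wellorder, linorder_topology}"
  assumes unc: "uncountable {..<m}" and cnt: "\<forall>x<m. countable {..<x}"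
    and unbounded: "\<And>\<beta>. \<beta> < m \<Longrightarrow> \<exists>\<gamma>\<in>C. \<beta> < \<gamma> \<and> \<gamma> < m"
  shows "uncountable (C \<inter> {..<m})"
proof
  assume "countable (C \<inter> {..<m})"
  then obtain \<beta> where "\<beta> < m" "\<And>t. t \<in> C \<inter> {..<m} \<Longrightarrow> t \<le> \<beta>"
    using omega1_countable_bounded[OF unc cnt] by blast
  with unbounded show False by force
qed

lemma closed_contains_least_upper_bound:
  fixes \<delta> :: "'b::linorder_topology"
  assumes "closed C" "T \<subseteq> C" "T \<noteq> {}" "\<And>t. t \<in> T \<Longrightarrow> t \<le> \<delta>"
    and least: "\<And>z. (\<And>t. t \<in> T \<Longrightarrow> t \<le> z) \<Longrightarrow> \<delta> \<le> z"
  shows "\<delta> \<in> C"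
proof (rule ccontr)
  assume "\<delta> \<notin> C"
  moreover obtain t0 where "t0 \<in> T" using assms(3) by blast
  ultimately have "t0 < \<delta>" using assms(2,4) by (metis order.order_iff_strict subsetD)
  then obtain b where b: "b < \<delta>" "{b<..\<delta>} \<subseteq> -C"
    using open_left[of "-C" \<delta> t0] assms(1) \<open>\<delta> \<notin> C\<close> by auto
  then obtain t where "t \<in> T" "\<not> t \<le> b" using least by (meson not_le)
  then have "t \<in> {b<..\<delta>}" using assms(4) by (auto simp: not_le)
  then show False using b(2) \<open>t \<in> T\<close> assms(2) by auto
qed

lemma omega1_uncountable_closed_Inter:
  fixes m :: "'b::{wellorder, linorder_topology}"
  assumes unc: "uncountable {..<m}" and cnt: "\<forall>x<m. countable {..<x}"
    and closed: "\<And>k::nat. closed (C k)" and C: "\<And>k. uncountable (C k \<inter> {..<m})"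
  shows "uncountable ((\<Inter>k. C k) \<inter> {..<m})"
proof (rule omega1_unbounded_imp_uncountable[OF unc cnt])
  fix \<beta> assume "\<beta> < m"
  \<comment> \<open>An increasing sequence visiting every C k infinitely often; its supremum lies in all C k.\<close>
  have "\<exists>\<gamma>. \<forall>j. (\<beta> < \<gamma> j \<and> \<gamma> j < m) \<and> (\<gamma> j < \<gamma> (Suc j) \<and> \<gamma> (Suc j) \<in> C (fst (prod_decode j)))"
  proof (rule dependent_nat_choice)
    show "\<exists>z. \<beta> < z \<and> z < m"
      using omega1_uncountable_imp_unbounded[OF cnt C \<open>\<beta> < m\<close>] by blast
    show "\<exists>z'. (\<beta> < z' \<and> z' < m) \<and> z < z' \<and> z' \<in> C (fst (prod_decode j))"
      if z: "\<beta> < z \<and> z < m" for z j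
    proof -
      obtain z' where "z' \<in> C (fst (prod_decode j))" "z < z'" "z' < m"
        using omega1_uncountable_imp_unbounded[OF cnt C] z by blast
      then show ?thesis using z by (meson order.strict_trans)
    qed
  qed
  then obtain \<gamma> where \<gamma>: "\<And>j. \<beta> < \<gamma> j" "\<And>j. \<gamma> j < m" "\<And>j. \<gamma> j < \<gamma> (Suc j)"
    "\<And>j. \<gamma> (Suc j) \<in> C (fst (prod_decode j))" by auto
  have mono: "strict_mono \<gamma>" using \<gamma>(3) by (simp add: strict_mono_Suc_iff)
  obtain \<beta>' where "\<beta>' < m" "\<And>j. \<gamma> j \<le> \<beta>'"
    by (rule omega1_countable_bounded[OF unc cnt, of "range \<gamma>"]) (use \<gamma>(2) in auto)
  define \<delta> where "\<delta> = (LEAST z. \<forall>j. \<gamma> j \<le> z)"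
  have \<delta>_ub: "\<gamma> j \<le> \<delta>" for j
    unfolding \<delta>_def by (rule LeastI2[of _ \<beta>']) (use \<open>\<And>j. \<gamma> j \<le> \<beta>'\<close> in auto)
  have \<delta>_least: "\<delta> \<le> z" if "\<And>j. \<gamma> j \<le> z" for z
    unfolding \<delta>_def by (rule Least_le) (simp add: that)
  have "\<delta> \<in> C k" for k
  proof (rule closed_contains_least_upper_bound[OF closed])
    let ?T = "{\<gamma> (Suc j) |j. fst (prod_decode j) = k}"
    show "?T \<subseteq> C k" using \<gamma>(4) by auto
    show "?T \<noteq> {}" by (auto intro: exI[of _ "prod_encode (k, 0)"])
    show "t \<le> \<delta>" if "t \<in> ?T" for t using that \<delta>_ub by auto
    show "\<delta> \<le> z" if z: "\<And>t. t \<in> ?T \<Longrightarrow> t \<le> z" for z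
    proof (rule \<delta>_least)
      fix j
      have "\<gamma> j \<le> \<gamma> (Suc (prod_encode (k, j)))"
        using mono le_prod_encode_2[of j k] by (simp add: strict_mono_less_eq)
      also have "\<dots> \<le> z" using z[of "\<gamma> (Suc (prod_encode (k, j)))"] by force
      finally show "\<gamma> j \<le> z" .
    qed
  qed
  moreover have "\<beta> < \<delta>" using \<gamma>(1)[of 0] \<delta>_ub[of 0] by simp
  moreover have "\<delta> < m" using \<delta>_least \<open>\<beta>' < m\<close> \<open>\<And>j. \<gamma> j \<le> \<beta>'\<close> by (meson le_less_trans)
  ultimately show "\<exists>\<gamma>\<in>\<Inter>k. C k. \<beta> < \<gamma> \<and> \<gamma> < m" by blast
qed

text \<open>For m = \<omega>_1 the closed sets with uncountable trace on [0, m) are the closed unbounded ones, so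
  this is stationarity of S \<inter> [0, m).\<close>

definition stationary_below :: "'b::{wellorder, linorder_topology} \<Rightarrow> 'b set \<Rightarrow> bool" where
  "stationary_below m S \<longleftrightarrow> (\<forall>C. closed C \<and> uncountable (C \<inter> {..<m}) \<longrightarrow> S \<inter> C \<noteq> {})"

text \<open>Entry (k, \<xi>) of an Ulam matrix: to_nat_on {..<\<alpha>} enumerates the countable set {..<\<alpha>}, and
  the entry collects the \<alpha> in which \<xi> receives the index k.\<close>

definition ulam_set :: "'b::{wellorder, linorder_topology} \<Rightarrow> nat \<Rightarrow> 'b \<Rightarrow> 'b set" where
  "ulam_set m k \<xi> = {\<alpha>. \<alpha> < m \<and> \<xi> < \<alpha> \<and> to_nat_on {..<\<alpha>} \<xi> = k}"

lemma ulam_set_disjoint: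
  fixes m :: "'b::{wellorder, linorder_topology}"
  assumes cnt: "\<forall>x<m. countable {..<x}" and "\<xi> \<noteq> \<eta>"
  shows "ulam_set m k \<xi> \<inter> ulam_set m k \<eta> = {}"
proof (rule equals0I)
  fix \<alpha> assume "\<alpha> \<in> ulam_set m k \<xi> \<inter> ulam_set m k \<eta>"
  then have \<alpha>: "\<alpha> < m" "\<xi> < \<alpha>" "\<eta> < \<alpha>" "to_nat_on {..<\<alpha>} \<xi> = to_nat_on {..<\<alpha>} \<eta>"
    by (auto simp: ulam_set_def)
  have "inj_on (to_nat_on {..<\<alpha>}) {..<\<alpha>}" using cnt \<alpha>(1) by auto
  then show False using \<alpha> \<open>\<xi> \<noteq> \<eta>\<close> by (auto dest: inj_onD)
qed

lemma omega1_stationary_ulam_set: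
  fixes m :: "'b::{wellorder, linorder_topology}"
  assumes unc: "uncountable {..<m}" and cnt: "\<forall>x<m. countable {..<x}" and "\<xi> < m"
  shows "\<exists>k. stationary_below m (ulam_set m k \<xi>)"
proof (rule ccontr)
  assume "\<nexists>k. stationary_below m (ulam_set m k \<xi>)"
  then have "\<forall>k. \<exists>C. closed C \<and> uncountable (C \<inter> {..<m}) \<and> ulam_set m k \<xi> \<inter> C = {}"
    unfolding stationary_below_def by blast
  then obtain C where C: "\<And>k. closed (C k)" "\<And>k. uncountable (C k \<inter> {..<m})"
    "\<And>k. ulam_set m k \<xi> \<inter> C k = {}" by metis
  obtain \<gamma> where "\<gamma> \<in> (\<Inter>k. C k)" "\<xi> < \<gamma>" "\<gamma> < m"
    by (rule omega1_uncountable_imp_unbounded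
        [OF cnt omega1_uncountable_closed_Inter[OF unc cnt C(1,2)] \<open>\<xi> < m\<close>])
  then have "\<gamma> \<in> ulam_set m (to_nat_on {..<\<gamma>} \<xi>) \<xi> \<inter> C (to_nat_on {..<\<gamma>} \<xi>)"
    by (auto simp: ulam_set_def)
  then show False using C(3) by blast
qed

lemma omega1_disjoint_stationary_sets:
  fixes m :: "'b::{wellorder, linorder_topology}"
  assumes unc: "uncountable {..<m}" and cnt: "\<forall>x<m. countable {..<x}"
  obtains S :: "nat \<Rightarrow> 'b set"
  where "\<And>j. stationary_below m (S j)" "\<And>i j. i \<noteq> j \<Longrightarrow> S i \<inter> S j = {}"
proof -
  obtain row where row: "\<And>\<xi>. \<xi> < m \<Longrightarrow> stationary_below m (ulam_set m (row \<xi>) \<xi>)"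
    using omega1_stationary_ulam_set[OF unc cnt] by metis
  \<comment> \<open>Pigeonhole: uncountably many columns \<xi> have a stationary entry in the same row k.\<close>
  have "\<exists>k. uncountable {\<xi>. \<xi> < m \<and> row \<xi> = k}"
  proof (rule ccontr)
    assume "\<nexists>k. uncountable {\<xi>. \<xi> < m \<and> row \<xi> = k}"
    then have "countable (\<Union>k. {\<xi>. \<xi> < m \<and> row \<xi> = k})" by auto
    moreover have "{..<m} \<subseteq> (\<Union>k. {\<xi>. \<xi> < m \<and> row \<xi> = k})" by auto
    ultimately show False using unc countable_subset by blast
  qed
  then obtain k where "infinite {\<xi>. \<xi> < m \<and> row \<xi> = k}" using countable_finite by blast
  then obtain r :: "nat \<Rightarrow> 'b" where r: "inj r" "range r \<subseteq> {\<xi>. \<xi> < m \<and> row \<xi> = k}"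
    using infinite_countable_subset by blast
  show ?thesis
  proof (rule that[of "\<lambda>j. ulam_set m k (r j)"])
    show "stationary_below m (ulam_set m k (r j))" for j
    proof -
      have "r j < m" "row (r j) = k" using r(2) by auto
      then show ?thesis using row[of "r j"] by simp
    qed
    show "ulam_set m k (r i) \<inter> ulam_set m k (r j) = {}" if "i \<noteq> j" for i j
      using ulam_set_disjoint[OF cnt] r(1) that by (simp add: inj_eq)
  qed
qed

lemma omega1_not_delta_space:
  fixes m :: "'b::{wellorder, linorder_topology}"
  assumes unc: "uncountable {..<m}" and cnt: "\<forall>x<m. countable {..<x}"
  shows "\<not> delta_space TYPE('b)"
proof
  assume delta: "delta_space TYPE('b)"
  obtain S :: "nat \<Rightarrow> 'b set"
    where stat: "\<And>j. stationary_below m (S j)" and disj: "\<And>i j. i \<noteq> j \<Longrightarrow> S i \<inter> S j = {}"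
    using omega1_disjoint_stationary_sets[OF unc cnt] by metis
  define D where "D n = (\<Union>j\<in>{n..}. S j)" for n
  have "decseq D" unfolding D_def by (intro decseq_SucI UN_mono) auto
  moreover have "(\<Inter>n. D n) = {}"
  proof (rule equals0I)
    fix \<alpha> assume "\<alpha> \<in> (\<Inter>n. D n)"
    then obtain j j' where "\<alpha> \<in> S j" "\<alpha> \<in> S j'" "Suc j \<le> j'"
      by (auto simp: D_def) (metis UN_E atLeast_iff)
    then show False using disj[of j j'] by auto
  qed
  ultimately have "\<exists>V. decseq V \<and> (\<forall>n. open (V n) \<and> D n \<subseteq> V n) \<and> (\<Inter>n. V n) = {}"
    using delta unfolding delta_space_def by blast
  then obtain V where V: "\<And>n. open (V n)" "\<And>n. D n \<subseteq> V n" "(\<Inter>n. V n) = {}"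
    by blast
  have "\<exists>N. uncountable (- V N \<inter> {..<m})"
  proof (rule ccontr)
    assume "\<nexists>N. uncountable (- V N \<inter> {..<m})"
    then have "countable (\<Union>N. - V N \<inter> {..<m})" by (intro countable_UN) auto
    moreover have "{..<m} \<subseteq> (\<Union>N. - V N \<inter> {..<m})" using V(3) by auto
    ultimately show False using unc countable_subset by blast
  qed
  then obtain N where "uncountable (- V N \<inter> {..<m})" by blast
  then have "S N \<inter> - V N \<noteq> {}"
    using stat[of N] V(1)[of N] unfolding stationary_below_def by (auto simp: closed_Compl)
  moreover have "S N \<subseteq> V N" using V(2)[of N] by (auto simp: D_def)
  ultimately show False by blast
qed

lemma wellorder_open_singleton:
  fixes x :: "'b::{wellorder, linorder_topology}"
  assumes succ: "x < y" "\<And>z. x < z \<Longrightarrow> y \<le> z"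
    and pred: "(\<forall>z. x \<le> z) \<or> (\<exists>w<x. \<forall>z. w < z \<longrightarrow> x \<le> z)"
  shows "open {x}"
proof -
  have below_y: "z \<le> x" if "z < y" for z
    using succ(2)[of z] that by (meson leD not_le)
  show ?thesis
    using pred
  proof
    assume "\<forall>z. x \<le> z"
    then have "{x} = {..<y}" using succ(1) below_y by (auto intro: antisym)
    then show ?thesis by simp
  next
    assume "\<exists>w<x. \<forall>z. w < z \<longrightarrow> x \<le> z"
    then obtain w where "w < x" "\<And>z. w < z \<Longrightarrow> x \<le> z" by blast
    then have "{x} = {w<..<y}" using succ(1) below_y by (auto intro: antisym)
    then show ?thesis by simp
  qed
qed

lemma omega1_initial_segment_isolated:
  fixes m :: "'b::{wellorder, linorder_topology}"
  assumes unc: "uncountable {..<m}" and cnt: "\<forall>x<m. countable {..<x}"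
  obtains a :: "nat \<Rightarrow> 'b" where "strict_mono a" "\<And>n. a n < m" "\<And>n. open {a n}"
proof -
  define a where "a = rec_nat (LEAST z::'b. True) (\<lambda>_ y. LEAST z. y < z)"
  have a_0: "a 0 = (LEAST z::'b. True)" and a_Suc: "a (Suc n) = (LEAST z. a n < z)" for n
    by (simp_all add: a_def)
  have a_0_le: "a 0 \<le> z" for z unfolding a_0 by (rule Least_le) simp
  have a_less: "a n < m" for n
  proof (induction n)
    case 0
    obtain w where "w < m" using unc by (metis countable_empty equals0I lessThan_iff)
    then show ?case using a_0_le[of w] by simp
  next
    case (Suc n)
    have "a (Suc n) \<le> m" unfolding a_Suc using Suc by (rule Least_le)
    moreover have "a (Suc n) \<noteq> m"
    proof
      assume "a (Suc n) = m"
      then have "{..<m} \<subseteq> insert (a n) {..<a n}"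
        unfolding a_Suc using not_less_Least by fastforce
      moreover have "countable (insert (a n) {..<a n})" using cnt Suc by auto
      ultimately show False using unc countable_subset by blast
    qed
    ultimately show ?case by simp
  qed
  have a_Suc_greater: "a n < a (Suc n)" for n
    unfolding a_Suc by (rule LeastI[of _ m]) (use a_less in simp)
  have a_Suc_least: "a (Suc n) \<le> z" if "a n < z" for n z
    unfolding a_Suc using that by (rule Least_le)
  show ?thesis
  proof (rule that)
    show "strict_mono a" using a_Suc_greater by (simp add: strict_mono_Suc_iff)
    show "open {a n}" for n
    proof (rule wellorder_open_singleton[OF a_Suc_greater a_Suc_least])
      show "(\<forall>z. a n \<le> z) \<or> (\<exists>w<a n. \<forall>z. w < z \<longrightarrow> a n \<le> z)"
      proof (cases n)
        case (Suc j)
        then show ?thesis using a_Suc_greater[of j] a_Suc_least[of j] by blast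
      qed (use a_0_le in simp)
    qed
  qed (rule a_less)
qed

lemma wellorder_bounded_strict_mono_convergent:
  fixes a :: "nat \<Rightarrow> 'b::{wellorder, linorder_topology}"
  assumes mono: "strict_mono a" and bounded: "\<And>n. a n \<le> m"
  obtains \<omega> where "a \<longlonglongrightarrow> \<omega>" "\<And>n. a n < \<omega>"
proof -
  define \<omega> where "\<omega> = (LEAST z. \<forall>n. a n \<le> z)"
  have ub: "a n \<le> \<omega>" for n
    unfolding \<omega>_def by (rule LeastI2[of _ m]) (use bounded in auto)
  have least: "\<omega> \<le> z" if "\<And>n. a n \<le> z" for z
    unfolding \<omega>_def by (rule Least_le) (simp add: that)
  have less: "a n < \<omega>" for n
    using ub[of "Suc n"] mono by (metis lessI order.strict_trans2 strict_monoD)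
  have "a \<longlonglongrightarrow> \<omega>"
  proof (rule topological_tendstoI)
    fix S assume S: "open S" "\<omega> \<in> S"
    obtain b where b: "b < \<omega>" "{b<..\<omega>} \<subseteq> S" using open_left[OF S less[of 0]] by blast
    obtain k where "b < a k" using least[of b] b(1) by (metis not_le)
    have "a n \<in> S" if "n \<ge> k" for n
    proof -
      have "a k \<le> a n" using mono that by (simp add: strict_mono_less_eq)
      then show ?thesis
        using \<open>b < a k\<close> less[of n] b(2)
        by (meson greaterThanAtMost_iff less_imp_le order.strict_trans2 subsetD)
    qed
    then show "eventually (\<lambda>n. a n \<in> S) sequentially" by (auto simp: eventually_sequentially)
  qed
  then show ?thesis using that less by blast
qed

lemma omega1_not_grothendieck:
  fixes m :: "'b::{wellorder, linorder_topology}"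
  assumes unc: "uncountable {..<m}" and cnt: "\<forall>x<m. countable {..<x}"
  shows "\<not> grothendieck TYPE('b \<Rightarrow>\<^sub>C real)"
proof -
  obtain a :: "nat \<Rightarrow> 'b"
    where mono: "strict_mono a" and "\<And>n. a n < m" and isolated: "\<And>n. open {a n}"
    using omega1_initial_segment_isolated[OF unc cnt] by metis
  then obtain \<omega> where lim: "a \<longlonglongrightarrow> \<omega>" and less: "\<And>n. a n < \<omega>"
    using wellorder_bounded_strict_mono_convergent[OF mono, of m] by (metis less_imp_le)
  define h where "h k t = (if t = a k then 1 else 0 :: real)" for k t
  show ?thesis
  proof (rule bcontfun_not_grothendieck_if_disjoint_bumps[where p=a and x=\<omega> and h=h])
    show "continuous_on UNIV (h k)" for k
    proof -
      have "continuous_on ({a k} \<union> - {a k}) (h k)"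
        unfolding h_def by (rule continuous_on_cases) (use isolated in auto)
      then show ?thesis by simp
    qed
    show "h k (a j) = (if j = k then 1 else 0)" for k j
      using mono by (simp add: h_def strict_mono_eq)
    show "h k \<omega> = 0" for k using less[of k] by (simp add: h_def)
  qed (use lim mono in \<open>auto simp: h_def strict_mono_eq\<close>)
qed

theorem corollary3p14:
  shows "(compact (UNIV :: 'a::t2_space set) \<and> infinite (UNIV :: 'a set) \<and> delta_space TYPE('a)
            \<longrightarrow> \<not> grothendieck TYPE('a \<Rightarrow>\<^sub>C real))
       \<and> ((\<exists>m :: 'b::{wellorder, linorder_topology}. (\<forall>x. x \<le> m) \<and> uncountable {..<m}
              \<and> (\<forall>x<m. countable {..<x}))
            \<longrightarrow> \<not> grothendieck TYPE('b \<Rightarrow>\<^sub>C real) \<and> \<not> delta_space TYPE('b))"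
proof (rule conjI; rule impI)
  assume "compact (UNIV :: 'a set) \<and> infinite (UNIV :: 'a set) \<and> delta_space TYPE('a)"
  then show "\<not> grothendieck TYPE('a \<Rightarrow>\<^sub>C real)"
    using compact_t2_delta_space_not_grothendieck by blast
next
  assume "\<exists>m :: 'b. (\<forall>x. x \<le> m) \<and> uncountable {..<m} \<and> (\<forall>x<m. countable {..<x})"
  then obtain m :: 'b where "uncountable {..<m}" "\<forall>x<m. countable {..<x}" by blast
  then show "\<not> grothendieck TYPE('b \<Rightarrow>\<^sub>C real) \<and> \<not> delta_space TYPE('b)"
    using omega1_not_grothendieck omega1_not_delta_space by blast
qed

end
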